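(* Let $(M,M_0)$ be a manifold–submanifold pair, $(X,x_0)$ a based space, $C=C(M,M_0;X)$ and $V=\bigvee_{k\ge1}D_k$. Then $\Psi\circ\sigma=(\sigma\triangle\sigma)\circ\Delta$ as maps $C\to\mathrm{SP}(V\wedge V)$.
   Context: $C(M,M_0;X)$ is the space of finite labelled configurations $\xi_I=\{(m_i,x_i)\}_{i\in I}$ ($m_i\in M$ pairwise distinct, $x_i\in X$) modulo the relation generated by $\xi_I\sim\xi_I\cup\{(m,x)\}$ whenever $m\in M_0$ or $x=x_0$; $\xi_J=\{(m_i,x_i)\}_{i\in J}$ for $J\subseteq I$. $C_k$ is the subspace of configurations with at most $k$ points, $D_k=C_k/C_{k-1}$ based at the collapsed point, $V=\bigvee_{k\ge1}D_k$. For a based space $(Y,e)$, $\mathrm{SP}(Y)$ is the free unital abelian monoid on $Y$ with identity $e$. The scanning map $\sigma:C\to\mathrm{SP}(V)$ is $\xi_I\mapsto\sum_{J\subseteq I}\xi_J$. $\Delta:C\to C\wedge C$ is the diagonal $\xi\mapsto(\xi,\xi)$. $\Psi:V\to\mathrm{SP}(V\wedge V)$ is $\xi_I\mapsto\sum_{A,B\subseteq I,\ A\cup B=I}(\xi_A,\xi_B)$, also denoting its extension to a monoid homomorphism $\mathrm{SP}(V)\to\mathrm{SP}(V\wedge V)$. For based maps $f:A\to\mathrm{SP}(B)$, $g:A'\to\mathrm{SP}(B')$, $f\triangle g:A\wedge A'\to\mathrm{SP}(B\wedge B')$ sends $(a,a')$ to $\sum_{i,j}(b_i,b'_j)$ where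 $f(a)=\sum_i b_i$, $g(a')=\sum_j b'_j$. *)

theory Defs
  imports Main "HOL-Library.Multiset"
begin

text \<open>A configuration is a finite partial map from M to X. Every class of
 C(M,M0;X) has a unique reduced representative: no point in M0 and no label x0.
 We identify C with the set of reduced configurations; the basepoint
 (empty configuration) is Map.empty.\<close>

definition config_space :: "'m set \<Rightarrow> 'm set \<Rightarrow> 'x set \<Rightarrow> 'x \<Rightarrow> ('m \<rightharpoonup> 'x) set" where
  "config_space M M0 X x0 =
     {\<xi>. finite (dom \<xi>) \<and> dom \<xi> \<subseteq> M - M0 \<and> ran \<xi> \<subseteq> X - {x0}}"

definition subconf :: "('m \<rightharpoonup> 'x) \<Rightarrow> 'm set \<Rightarrow> ('m \<rightharpoonup> 'x)" where
  "subconf \<xi> J = \<xi> |` J"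

text \<open>Points of V = wedge of the D_k (k >= 1): None is the wedge point; Some xi
 with xi a reduced configuration with exactly k >= 1 points is the point of D_k
 given by xi.\<close>

definition V_pt :: "('m \<rightharpoonup> 'x) \<Rightarrow> ('m \<rightharpoonup> 'x) option" where
  "V_pt \<xi> = (if dom \<xi> = {} then None else Some \<xi>)"

text \<open>Smash products: a point of A smash B is None (the basepoint) or Some (a,b)
 with a, b non-base. For based spaces modelled with basepoint None: \<close>

definition smash_pt :: "'a option \<times> 'b option \<Rightarrow> ('a \<times> 'b) option" where
  "smash_pt p = (case p of (Some a, Some b) \<Rightarrow> Some (a, b) | _ \<Rightarrow> None)"

text \<open>SP(Y,e): finite multisets of non-base points; the generator associated to y
 (the identity e when y is the basepoint None).\<close>

definition sp_gen :: "'a option \<Rightarrow> 'a option multiset" where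
  "sp_gen y = (if y = None then {#} else {#y#})"

definition scan :: "('m \<rightharpoonup> 'x) \<Rightarrow> ('m \<rightharpoonup> 'x) option multiset" where
  "scan \<xi> = (\<Sum>J\<in>Pow (dom \<xi>). sp_gen (V_pt (subconf \<xi> J)))"

definition diag :: "('m \<rightharpoonup> 'x) \<Rightarrow> (('m \<rightharpoonup> 'x) \<times> ('m \<rightharpoonup> 'x)) option" where
  "diag \<xi> = smash_pt (V_pt \<xi>, V_pt \<xi>)"

definition Psi_pt :: "('m \<rightharpoonup> 'x) option \<Rightarrow> (('m \<rightharpoonup> 'x) \<times> ('m \<rightharpoonup> 'x)) option multiset" where
  "Psi_pt v = (case v of None \<Rightarrow> {#}
     | Some \<xi> \<Rightarrow> (\<Sum>(A,B)\<in>{(A,B). A \<union> B = dom \<xi>}.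
                   sp_gen (smash_pt (V_pt (subconf \<xi> A), V_pt (subconf \<xi> B)))))"

definition Psi :: "('m \<rightharpoonup> 'x) option multiset \<Rightarrow> (('m \<rightharpoonup> 'x) \<times> ('m \<rightharpoonup> 'x)) option multiset" where
  "Psi S = sum_mset (image_mset Psi_pt S)"

definition tri :: "('a \<Rightarrow> 'b option multiset) \<Rightarrow> ('c \<Rightarrow> 'd option multiset)
                   \<Rightarrow> ('a \<times> 'c) option \<Rightarrow> ('b \<times> 'd) option multiset" where
  "tri f g p = (case p of None \<Rightarrow> {#}
     | Some (a, a') \<Rightarrow> sum_mset (image_mset (\<lambda>b. sum_mset (image_mset (\<lambda>b'. sp_gen (smash_pt (b, b'))) (g a'))) (f a)))"

end

theory Submission
  imports Defs
begin

text \<open>Writing \<open>P\<close> for the nonempty subsets of the support of \<open>\<xi>\<close>, the scan \<open>\<sigma>(\<xi>)\<close> is the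
  sum of the subconfigurations \<open>\<xi>\<^sub>J\<close>, \<open>J \<in> P\<close>. Both sides of the identity are then the sum of
  \<open>(\<xi>\<^sub>A, \<xi>\<^sub>B)\<close> over all \<open>(A, B) \<in> P \<times> P\<close>: the right-hand side directly as a double sum, the
  left-hand side grouped by \<open>J = A \<union> B\<close>, because \<open>(\<xi>\<^sub>J)\<^sub>A = \<xi>\<^sub>A\<close> for \<open>A \<subseteq> J\<close>.\<close>

lemma scan_eq_sum_restrict:
  assumes "finite (dom \<xi>)"
  shows "scan \<xi> = (\<Sum>J\<in>Pow (dom \<xi>) - {{}}. {#Some (\<xi> |` J)#})"
proof -
  have "scan \<xi> = (\<Sum>J\<in>Pow (dom \<xi>) - {{}}. sp_gen (V_pt (subconf \<xi> J)))"
    unfolding scan_def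
    by (rule sum.mono_neutral_right) (auto simp: assms sp_gen_def V_pt_def subconf_def)
  also have "\<dots> = (\<Sum>J\<in>Pow (dom \<xi>) - {{}}. {#Some (\<xi> |` J)#})"
    by (rule sum.cong) (auto simp: sp_gen_def V_pt_def subconf_def)
  finally show ?thesis .
qed

lemma Psi_singleton: "Psi {#v#} = Psi_pt v"
  by (simp add: Psi_def)

lemma Psi_sum: "Psi (\<Sum>x\<in>S. F x) = (\<Sum>x\<in>S. Psi (F x))"
  by (induction S rule: infinite_finite_induct) (simp_all add: Psi_def)

lemma V_pt_subconf_restrict:
  assumes "A \<subseteq> J" and "A \<subseteq> dom \<xi>" and "A \<noteq> {}"
  shows "V_pt (subconf (\<xi> |` J) A) = Some (\<xi> |` A)"
proof -
  have "subconf (\<xi> |` J) A = \<xi> |` A"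
    using assms(1) by (simp add: subconf_def Int_absorb1)
  moreover have "dom (\<xi> |` A) \<noteq> {}"
    using assms(2,3) by auto
  ultimately show ?thesis
    by (simp add: V_pt_def)
qed

lemma Psi_pt_restrict:
  assumes "J \<subseteq> dom \<xi>" and "finite J"
  shows "Psi_pt (Some (\<xi> |` J)) =
    (\<Sum>(A, B)\<in>{(A, B). A \<union> B = J \<and> A \<noteq> {} \<and> B \<noteq> {}}. {#Some (\<xi> |` A, \<xi> |` B)#})"
proof -
  let ?summand = "\<lambda>(A, B). sp_gen (smash_pt (V_pt (subconf (\<xi> |` J) A), V_pt (subconf (\<xi> |` J) B)))"
  have dom_restrict: "dom (\<xi> |` J) = J"
    using assms by auto
  have finite_pairs: "finite {(A, B). A \<union> B = J}"
    by (rule finite_subset[of _ "Pow J \<times> Pow J"]) (auto simp: assms(2))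
  have "Psi_pt (Some (\<xi> |` J)) = sum ?summand {(A, B). A \<union> B = J}"
    by (simp only: Psi_pt_def option.case dom_restrict)
  also have "\<dots> = sum ?summand {(A, B). A \<union> B = J \<and> A \<noteq> {} \<and> B \<noteq> {}}"
    using finite_pairs
    by (intro sum.mono_neutral_right)
       (auto simp: sp_gen_def smash_pt_def V_pt_def subconf_def split: option.splits)
  also have "\<dots> = (\<Sum>(A, B)\<in>{(A, B). A \<union> B = J \<and> A \<noteq> {} \<and> B \<noteq> {}}.
                    {#Some (\<xi> |` A, \<xi> |` B)#})"
  proof (rule sum.cong)
    fix AB assume "AB \<in> {(A, B). A \<union> B = J \<and> A \<noteq> {} \<and> B \<noteq> {}}"
    then obtain A B where "AB = (A, B)" "A \<union> B = J" "A \<noteq> {}" "B \<noteq> {}"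
      by blast
    moreover from this assms(1) have "V_pt (subconf (\<xi> |` J) A) = Some (\<xi> |` A)"
      and "V_pt (subconf (\<xi> |` J) B) = Some (\<xi> |` B)"
      by (auto intro!: V_pt_subconf_restrict)
    ultimately show "?summand AB = (\<lambda>(A, B). {#Some (\<xi> |` A, \<xi> |` B)#}) AB"
      by (simp add: sp_gen_def smash_pt_def)
  qed simp
  finally show ?thesis .
qed

lemma Psi_scan:
  assumes "finite (dom \<xi>)"
  defines "P \<equiv> Pow (dom \<xi>) - {{}}"
  shows "Psi (scan \<xi>) = (\<Sum>(A, B)\<in>P \<times> P. {#Some (\<xi> |` A, \<xi> |` B)#})"
proof -
  let ?pair = "\<lambda>(A, B). {#Some (\<xi> |` A, \<xi> |` B)#}"
  have "Psi (scan \<xi>) = (\<Sum>J\<in>P. Psi_pt (Some (\<xi> |` J)))"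
    by (simp add: scan_eq_sum_restrict[OF assms(1)] Psi_sum Psi_singleton P_def)
  also have "\<dots> = (\<Sum>J\<in>P. sum ?pair {x \<in> P \<times> P. fst x \<union> snd x = J})"
  proof (rule sum.cong)
    fix J assume "J \<in> P"
    then have "{(A, B). A \<union> B = J \<and> A \<noteq> {} \<and> B \<noteq> {}} = {x \<in> P \<times> P. fst x \<union> snd x = J}"
      by (auto simp: P_def)
    moreover from \<open>J \<in> P\<close> assms(1) have "J \<subseteq> dom \<xi>" "finite J"
      by (auto simp: P_def intro: finite_subset)
    ultimately show "Psi_pt (Some (\<xi> |` J)) = sum ?pair {x \<in> P \<times> P. fst x \<union> snd x = J}"
      by (simp add: Psi_pt_restrict)
  qed simp
  also have "\<dots> = sum ?pair (P \<times> P)"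
  proof (rule sum.group)
    show "finite P"
      using assms(1) by (simp add: P_def)
    then show "finite (P \<times> P)"
      by simp
    show "(\<lambda>x. fst x \<union> snd x) ` (P \<times> P) \<subseteq> P"
      by (auto simp: P_def)
  qed
  finally show ?thesis .
qed

lemma tri_scan_scan_diag:
  assumes "finite (dom \<xi>)"
  defines "P \<equiv> Pow (dom \<xi>) - {{}}"
  shows "tri scan scan (diag \<xi>) = (\<Sum>(A, B)\<in>P \<times> P. {#Some (\<xi> |` A, \<xi> |` B)#})"
proof (cases "dom \<xi> = {}")
  case True
  then show ?thesis
    by (simp add: tri_def diag_def V_pt_def smash_pt_def P_def)
next
  case False
  have scan_image: "scan \<xi> = image_mset (\<lambda>J. Some (\<xi> |` J)) (mset_set P)"
    by (simp add: scan_eq_sum_restrict[OF assms(1)] sum_unfold_sum_mset P_def)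
  have "tri scan scan (diag \<xi>) = (\<Sum>A\<in>P. \<Sum>B\<in>P. {#Some (\<xi> |` A, \<xi> |` B)#})"
    using False
    by (simp add: tri_def diag_def V_pt_def smash_pt_def sp_gen_def scan_image
                  multiset.map_comp o_def sum_unfold_sum_mset)
  then show ?thesis
    by (simp add: sum.cartesian_product)
qed

theorem proposition2p2:
  fixes M M0 :: "'m set" and X :: "'x set" and x0 :: 'x
  assumes "M0 \<subseteq> M" and "x0 \<in> X"
  shows "\<forall>\<xi>\<in>config_space M M0 X x0. Psi (scan \<xi>) = tri scan scan (diag \<xi>)"
proof
  fix \<xi> :: "'m \<rightharpoonup> 'x"
  assume "\<xi> \<in> config_space M M0 X x0"
  then have "finite (dom \<xi>)"
    by (simp add: config_space_def)
  then show "Psi (scan \<xi>) = tri scan scan (diag \<xi>)"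
    by (simp add: Psi_scan tri_scan_scan_diag)
qed

end
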